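(* Let $\mathbb{F}$ be a field and $\mathcal{H}=(Q_0,Q_1,\beta)$ a directed tensor-labeled hypergraph. Then $$\dim_{\mathbb{F}}\mathcal{Z}(\mathcal{H})=|Q_1|-|V_{\mathrm{macro}}|+c_{\mathrm{macro}}+\delta(\mathcal{H}).$$
   Context: $Q_0,Q_1$ are finite sets (vertices, hyperedges). $T(\mathbb{F}^{Q_0})=\bigoplus_{k\ge0}(\mathbb{F}^{Q_0})^{\otimes k}$ is the tensor algebra. A directed tensor-labeled hypergraph is $\mathcal{H}=(Q_0,Q_1,\beta)$ with $\beta:\mathbb{F}^{Q_1}\to T(\mathbb{F}^{Q_0})\times T(\mathbb{F}^{Q_0})$ linear; write $\beta(\mathbf{1}_e)=(A_e,B_e)$ (source and target tensors). The tensor incidence map $\partial_\beta:\mathbb{F}^{Q_1}\to T(\mathbb{F}^{Q_0})$ is linear with $\partial_\beta(\mathbf{1}_e)=B_e-A_e$, and $\mathcal{Z}(\mathcal{H}):=\mathrm{Ker}(\partial_\beta)$. $V_{\mathrm{macro}}:=\{A_e\}_{e\in Q_1}\cup\{B_e\}_{e\in Q_1}\subset T(\mathbb{F}^{Q_0})$ (as a set). The macrograph $\mathcal{H}_{\mathrm{macro}}$ is the directed multigraph with vertex set $V_{\mathrm{macro}}$, edge set $Q_1$, source $e\mapsto A_e$, target $e\mapsto B_e$; $c_{\mathrm{macro}}$ is its number of weakly connected components and $B_{\mathrm{macro}}:\mathbb{F}^{Q_1}\to\mathbb{F}^{V_{\mathrm{macro}}}$ its incidence map $\mathbf{1}_e\mapsto\mathbf{1}_{B_e}-\mathbf{1}_{A_e}$.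 The evaluation map $\hat\phi:\mathbb{F}^{V_{\mathrm{macro}}}\to T(\mathbb{F}^{Q_0})$ is linear with $\mathbf{1}_w\mapsto w$. The defect invariant is $\delta(\mathcal{H}):=\dim_{\mathbb{F}}(\mathrm{Im}(B_{\mathrm{macro}})\cap\mathrm{Ker}(\hat\phi))$. *)

theory Defs
  imports Complex_Main "HOL-Library.Function_Algebras"
begin

text \<open>Vector spaces of the form F^X are represented as functions X-type to the field
  with pointwise operations; scalar multiplication is fscale.\<close>

definition fscale :: "'a::field \<Rightarrow> ('b \<Rightarrow> 'a) \<Rightarrow> ('b \<Rightarrow> 'a)" where
  "fscale c f = (\<lambda>x. c * f x)"

definition fdim :: "('b \<Rightarrow> 'a::field) set \<Rightarrow> nat" where
  "fdim S = vector_space.dim (fscale :: 'a \<Rightarrow> ('b \<Rightarrow> 'a) \<Rightarrow> ('b \<Rightarrow> 'a)) S"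

definition unitv :: "'b \<Rightarrow> ('b \<Rightarrow> 'a::field)" where
  "unitv x = (\<lambda>y. if y = x then 1 else 0)"

definition fspace :: "'b set \<Rightarrow> ('b \<Rightarrow> 'a::zero) set" where
  "fspace X = {f. \<forall>x. x \<notin> X \<longrightarrow> f x = 0}"

text \<open>The tensor algebra T(F^{Q0}) = direct sum over k of (F^{Q0})^{\<otimes>k}, represented via its
  standard basis of words (lists) over Q0: finitely supported functions on words over Q0.
  The word w = [q1,...,qk] corresponds to the basis tensor 1_{q1} \<otimes> ... \<otimes> 1_{qk}.\<close>
definition tensor_alg :: "'v set \<Rightarrow> ('v list \<Rightarrow> 'a::zero) set" where
  "tensor_alg Q0 = {t. finite {w. t w \<noteq> 0} \<and> (\<forall>w. t w \<noteq> 0 \<longrightarrow> set w \<subseteq> Q0)}"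

text \<open>A directed tensor-labeled hypergraph (Q0,Q1,beta), beta(1_e) = (A e, B e).\<close>
definition tensor_hypergraph ::
  "'v set \<Rightarrow> 'e set \<Rightarrow> ('e \<Rightarrow> 'v list \<Rightarrow> 'a::field) \<Rightarrow> ('e \<Rightarrow> 'v list \<Rightarrow> 'a) \<Rightarrow> bool" where
  "tensor_hypergraph Q0 Q1 A B \<longleftrightarrow> finite Q0 \<and> finite Q1 \<and>
     (\<forall>e\<in>Q1. A e \<in> tensor_alg Q0 \<and> B e \<in> tensor_alg Q0)"

definition tensor_incidence ::
  "'e set \<Rightarrow> ('e \<Rightarrow> 'v list \<Rightarrow> 'a::field) \<Rightarrow> ('e \<Rightarrow> 'v list \<Rightarrow> 'a) \<Rightarrow> ('e \<Rightarrow> 'a) \<Rightarrow> ('v list \<Rightarrow> 'a)" where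
  "tensor_incidence Q1 A B f = (\<Sum>e\<in>Q1. fscale (f e) (B e - A e))"

definition cycle_space ::
  "'e set \<Rightarrow> ('e \<Rightarrow> 'v list \<Rightarrow> 'a::field) \<Rightarrow> ('e \<Rightarrow> 'v list \<Rightarrow> 'a) \<Rightarrow> ('e \<Rightarrow> 'a) set" where
  "cycle_space Q1 A B = {f \<in> fspace Q1. tensor_incidence Q1 A B f = 0}"

definition V_macro :: "'e set \<Rightarrow> ('e \<Rightarrow> 't) \<Rightarrow> ('e \<Rightarrow> 't) \<Rightarrow> 't set" where
  "V_macro Q1 A B = A ` Q1 \<union> B ` Q1"

definition c_macro :: "'e set \<Rightarrow> ('e \<Rightarrow> 't) \<Rightarrow> ('e \<Rightarrow> 't) \<Rightarrow> nat" where
  "c_macro Q1 A B =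
     card (V_macro Q1 A B //
       ((\<lambda>e. (A e, B e)) ` Q1 \<union> (\<lambda>e. (B e, A e)) ` Q1)\<^sup>*)"

definition B_macro :: "'e set \<Rightarrow> ('e \<Rightarrow> 't) \<Rightarrow> ('e \<Rightarrow> 't) \<Rightarrow> ('e \<Rightarrow> 'a::field) \<Rightarrow> ('t \<Rightarrow> 'a)" where
  "B_macro Q1 A B f = (\<Sum>e\<in>Q1. fscale (f e) (unitv (B e) - unitv (A e)))"

definition eval_macro :: "'e set \<Rightarrow> ('e \<Rightarrow> 'v list \<Rightarrow> 'a::field) \<Rightarrow> ('e \<Rightarrow> 'v list \<Rightarrow> 'a)
    \<Rightarrow> (('v list \<Rightarrow> 'a) \<Rightarrow> 'a) \<Rightarrow> ('v list \<Rightarrow> 'a)" where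
  "eval_macro Q1 A B g = (\<Sum>w\<in>V_macro Q1 A B. fscale (g w) w)"

definition defect :: "'e set \<Rightarrow> ('e \<Rightarrow> 'v list \<Rightarrow> 'a::field) \<Rightarrow> ('e \<Rightarrow> 'v list \<Rightarrow> 'a) \<Rightarrow> nat" where
  "defect Q1 A B =
     fdim (B_macro Q1 A B ` fspace Q1 \<inter>
           {g \<in> fspace (V_macro Q1 A B). eval_macro Q1 A B g = 0})"

end

theory Submission
  imports Defs
begin

(* The tensor incidence map factors as d = phi o B_macro, with phi the evaluation map.
   Rank-nullity for B_macro on Z(H) = B_macro^-1 (Ker phi) gives
   dim Z(H) = delta(H) + dim Ker B_macro, and on all of F^Q1 it gives
   |Q1| = rank B_macro + dim Ker B_macro.  Finally rank B_macro = |V_macro| - c_macro, as for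
   the incidence map of any directed graph: its image is the kernel of the surjection
   F^V_macro -> F^components that sums the coordinates over each weakly connected component. *)

lemma (in vector_space) span_Diff_Int_span_eq_0:
  assumes B: "independent B" and "K \<subseteq> B" and x: "x \<in> span (B - K)" "x \<in> span K"
  shows "x = 0"
proof -
  have "representation B x = representation K x"
    using representation_extend[OF B x(2) \<open>K \<subseteq> B\<close>] .
  moreover have "representation B x = representation (B - K) x"
    using representation_extend[OF B x(1)] by blast
  ultimately have "representation B x = (\<lambda>b. 0)"
    using representation_ne_zero[of K x] representation_ne_zero[of "B - K" x] by fastforce
  moreover have "x \<in> span B"
    using x(2) span_mono[OF \<open>K \<subseteq> B\<close>] by blast
  ultimately show "x = 0"
    using sum_nonzero_representation_eq[OF B, of x] by simp
qed

(* The ambient spaces F^X need not be finite-dimensional, so only S is assumed to be. *)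
lemma (in vector_space_pair) rank_nullity_subspace:
  assumes f: "Vector_Spaces.linear s1 s2 f" and S: "vs1.subspace S"
    and T: "finite T" "S \<subseteq> vs1.span T"
  shows "vs1.dim S = vs2.dim (f ` S) + vs1.dim {x \<in> S. f x = 0}"
proof -
  obtain K where K: "K \<subseteq> {x \<in> S. f x = 0}" "vs1.independent K" "{x \<in> S. f x = 0} \<subseteq> vs1.span K"
    using vs1.maximal_independent_subset by blast
  obtain B where B: "K \<subseteq> B" "B \<subseteq> S" "vs1.independent B" "S \<subseteq> vs1.span B"
    using vs1.maximal_independent_subset_extend[of K S] K by auto
  have "finite B"
    using vs1.independent_span_bound[OF T(1) B(3)] B(2) T(2) by auto
  have span_B: "vs1.span B = S"
    using vs1.span_minimal[OF B(2) S] B(4) by auto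
  have "f ` B \<subseteq> insert 0 (f ` (B - K))"
    using K(1) by auto
  then have "vs2.span (f ` B) = vs2.span (f ` (B - K))"
    using vs2.span_mono[of "f ` B" "insert 0 (f ` (B - K))"] vs2.span_mono[of "f ` (B - K)" "f ` B"]
    by auto
  then have image: "f ` S = vs2.span (f ` (B - K))"
    using linear_span_image[OF f, of B] span_B by simp
  have "x = 0" if "x \<in> vs1.span (B - K)" "f x = 0" for x
  proof (rule vs1.span_Diff_Int_span_eq_0[OF B(3) B(1) that(1)])
    show "x \<in> vs1.span K"
      using that K(3) vs1.span_mono[of "B - K" B] span_B by auto
  qed
  then have inj: "inj_on f (vs1.span (B - K))"
    using linear_inj_on_iff_eq_0[OF f vs1.subspace_span] by blast
  have "vs2.independent (f ` (B - K))"
    using linear_independent_injective_image[OF f _ inj] vs1.independent_mono[OF B(3)] by auto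
  then have "vs2.dim (f ` S) = card (B - K)"
    using image vs2.dim_span_eq_card_independent card_image[OF inj_on_subset[OF inj vs1.span_superset]]
    by simp
  moreover have "vs1.dim S = card B"
    using vs1.basis_card_eq_dim B by auto
  moreover have "vs1.dim {x \<in> S. f x = 0} = card K"
    using vs1.basis_card_eq_dim K by auto
  ultimately show ?thesis
    using card_Diff_subset[OF finite_subset[OF B(1) \<open>finite B\<close>] B(1)] card_mono[OF \<open>finite B\<close> B(1)]
    by simp
qed

lemma (in vector_space_pair) dim_preimage_subspace:
  assumes f: "Vector_Spaces.linear s1 s2 f" and S: "vs1.subspace S" and W: "vs2.subspace W"
    and T: "finite T" "S \<subseteq> vs1.span T"
  shows "vs1.dim {x \<in> S. f x \<in> W} = vs2.dim (f ` S \<inter> W) + vs1.dim {x \<in> S. f x = 0}"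
proof -
  have "{x \<in> S. f x \<in> W} = S \<inter> {x. f x \<in> W}"
    by blast
  moreover have "vs1.subspace {x. f x \<in> W}"
    using W linear_0[OF f] linear_add[OF f] linear_scale[OF f]
    by (auto simp: vs1.subspace_def vs2.subspace_def)
  ultimately have "vs1.subspace {x \<in> S. f x \<in> W}"
    using vs1.subspace_inter[OF S] by simp
  moreover have "{x \<in> {x \<in> S. f x \<in> W}. f x = 0} = {x \<in> S. f x = 0}"
    using vs2.subspace_0[OF W] by auto
  moreover have "f ` {x \<in> S. f x \<in> W} = f ` S \<inter> W"
    by blast
  ultimately show ?thesis
    using rank_nullity_subspace[OF f _ T(1), of "{x \<in> S. f x \<in> W}"] T(2) by auto
qed

interpretation fs: vector_space "fscale :: 'a::field \<Rightarrow> ('b \<Rightarrow> 'a) \<Rightarrow> ('b \<Rightarrow> 'a)"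
  by unfold_locales (auto simp: fscale_def fun_eq_iff algebra_simps)

interpretation fsp: vector_space_pair "fscale :: 'a::field \<Rightarrow> ('b \<Rightarrow> 'a) \<Rightarrow> ('b \<Rightarrow> 'a)"
  "fscale :: 'a \<Rightarrow> ('c \<Rightarrow> 'a) \<Rightarrow> ('c \<Rightarrow> 'a)"
  by unfold_locales

lemma fscale_apply [simp]: "fscale c f x = c * f x"
  by (simp add: fscale_def)

lemma sum_apply: "(\<Sum>i\<in>I. F i) x = (\<Sum>i\<in>I. F i x)"
  by (induction I rule: infinite_finite_induct) auto

lemma unitv_apply: "unitv y x = (if x = y then 1 else 0)"
  by (simp add: unitv_def)

lemma unitv_eq_iff [simp]: "unitv x = (unitv y :: 'b \<Rightarrow> 'a::field) \<longleftrightarrow> x = y"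
  by (auto simp: unitv_def fun_eq_iff)

lemma unitv_in_fspace: "x \<in> X \<Longrightarrow> unitv x \<in> fspace X"
  by (auto simp: fspace_def unitv_def)

lemma linear_fscaleI:
  assumes "\<And>x y. f (x + y) = f x + f y" "\<And>c x. f (fscale c x) = fscale c (f x)"
  shows "Vector_Spaces.linear (fscale :: 'a::field \<Rightarrow> _) fscale f"
  unfolding Vector_Spaces.linear_iff by (intro conjI allI assms fs.vector_space_axioms)

lemma subspace_fspace: "fs.subspace (fspace X)"
  by (auto simp: fs.subspace_def fspace_def)

lemma independent_unitv: "fs.independent (unitv ` X :: ('b \<Rightarrow> 'a::field) set)"
  unfolding fs.independent_explicit_finite_subsets
proof (intro allI impI ballI)
  fix S u v
  assume S: "S \<subseteq> (unitv ` X :: ('b \<Rightarrow> 'a) set)" "finite S"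
    and sum_0: "(\<Sum>v\<in>S. fscale (u v) v) = 0" and "v \<in> S"
  then obtain x where x: "v = unitv x" by auto
  have "0 = (\<Sum>w\<in>S. fscale (u w) w) x"
    using sum_0 by simp
  also have "\<dots> = (\<Sum>w\<in>S. if w = v then u w else 0)"
    unfolding sum_apply using S(1) x by (intro sum.cong) (auto simp: unitv_apply)
  also have "\<dots> = u v"
    using \<open>v \<in> S\<close> S(2) by simp
  finally show "u v = 0" by simp
qed

lemma fspace_eq_sum_unitv:
  assumes "finite X" "f \<in> fspace X"
  shows "f = (\<Sum>x\<in>X. fscale (f x) (unitv x))"
proof
  fix y
  have "(\<Sum>x\<in>X. fscale (f x) (unitv x)) y = (\<Sum>x\<in>X. if y = x then f x else 0)"
    unfolding sum_apply by (rule sum.cong) (auto simp: unitv_apply)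
  then show "f y = (\<Sum>x\<in>X. fscale (f x) (unitv x)) y"
    using assms by (auto simp: fspace_def)
qed

lemma span_unitv:
  assumes "finite X"
  shows "fs.span (unitv ` X) = (fspace X :: ('b \<Rightarrow> 'a::field) set)"
proof
  show "fs.span (unitv ` X) \<subseteq> (fspace X :: ('b \<Rightarrow> 'a) set)"
    by (rule fs.span_minimal[OF _ subspace_fspace]) (auto intro: unitv_in_fspace)
  show "(fspace X :: ('b \<Rightarrow> 'a) set) \<subseteq> fs.span (unitv ` X)"
  proof
    fix f :: "'b \<Rightarrow> 'a"
    assume "f \<in> fspace X"
    then have "f = (\<Sum>x\<in>X. fscale (f x) (unitv x))"
      using fspace_eq_sum_unitv assms by blast
    also have "\<dots> \<in> fs.span (unitv ` X)"
      by (intro fs.span_sum fs.span_scale fs.span_base) auto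
    finally show "f \<in> fs.span (unitv ` X)" .
  qed
qed

lemma dim_fspace:
  assumes "finite X"
  shows "fs.dim (fspace X :: ('b \<Rightarrow> 'a::field) set) = card X"
proof -
  have "fs.dim (fspace X :: ('b \<Rightarrow> 'a) set) = card (unitv ` X :: ('b \<Rightarrow> 'a) set)"
    using span_unitv[OF assms] fs.dim_span_eq_card_independent[OF independent_unitv] by metis
  also have "\<dots> = card X"
    by (rule card_image) (auto simp: inj_on_def)
  finally show ?thesis .
qed

lemma rank_nullity_fspace:
  fixes f :: "('b \<Rightarrow> 'a::field) \<Rightarrow> ('c \<Rightarrow> 'a)"
  assumes "finite X" and f: "Vector_Spaces.linear fscale fscale f"
  shows "card X = fdim (f ` fspace X) + fdim {x \<in> fspace X. f x = 0}"
proof -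
  have "fs.dim (fspace X :: ('b \<Rightarrow> 'a) set) = fdim (f ` fspace X) + fdim {x \<in> fspace X. f x = 0}"
    unfolding fdim_def
    by (rule fsp.rank_nullity_subspace[OF f subspace_fspace _ equalityD2[OF span_unitv]])
      (simp_all add: assms(1))
  then show ?thesis
    by (simp add: dim_fspace[OF assms(1)])
qed

definition component_sum :: "'t set \<Rightarrow> 't rel \<Rightarrow> ('t \<Rightarrow> 'a::field) \<Rightarrow> ('t set \<Rightarrow> 'a)" where
  "component_sum V R g = (\<lambda>C. if C \<in> V // R then \<Sum>w\<in>C. g w else 0)"

lemma linear_component_sum: "Vector_Spaces.linear fscale fscale (component_sum V R)"
  by (rule linear_fscaleI) (auto simp: component_sum_def fun_eq_iff sum.distrib sum_distrib_left)

lemma component_sum_unitv: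
  assumes "finite V" and R: "equiv V R" and "w \<in> V"
  shows "component_sum V R (unitv w) = unitv (R``{w})"
proof
  fix C
  show "component_sum V R (unitv w) C = unitv (R``{w}) C"
  proof (cases "C \<in> V // R")
    case True
    then obtain u where u: "u \<in> V" "C = R``{u}"
      by (rule quotientE)
    have "finite C"
      using in_quotient_imp_subset[OF R True] \<open>finite V\<close> finite_subset by blast
    have "w \<in> C \<longleftrightarrow> C = R``{w}"
      using u \<open>w \<in> V\<close> equiv_class_eq_iff[OF R, of u w] by auto
    moreover have "(\<Sum>x\<in>C. unitv w x) = (if w \<in> C then 1 else 0)"
      using \<open>finite C\<close> by (simp add: unitv_apply)
    ultimately show ?thesis
      using True by (simp add: component_sum_def unitv_apply)
  next
    case False
    moreover have "R``{w} \<in> V // R"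
      using \<open>w \<in> V\<close> by (rule quotientI)
    ultimately show ?thesis
      by (auto simp: component_sum_def unitv_apply)
  qed
qed

lemma component_sum_image:
  assumes V: "finite V" and R: "equiv V R"
  shows "component_sum V R ` fspace V = fspace (V // R)"
proof -
  have "component_sum V R ` unitv ` V = (\<lambda>w. unitv (R``{w})) ` V"
    unfolding image_image by (rule image_cong[OF refl component_sum_unitv[OF V R]])
  also have "\<dots> = unitv ` (V // R)"
    by (auto simp: quotient_def)
  finally have "component_sum V R ` fs.span (unitv ` V) = fs.span (unitv ` (V // R))"
    using fsp.linear_span_image[OF linear_component_sum] by metis
  moreover have "finite (V // R)"
    using finite_quotient[OF V equiv_type[OF R]] .
  ultimately show ?thesis
    by (simp add: span_unitv V)
qed

lemma sum_quotient:
  assumes "finite A" and r: "equiv A r"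
  shows "(\<Sum>x\<in>A. f x) = (\<Sum>C\<in>A // r. \<Sum>x\<in>C. f x)"
proof -
  have "\<forall>C\<in>A // r. finite C"
    using in_quotient_imp_subset[OF r] \<open>finite A\<close> finite_subset by blast
  moreover have "\<forall>C\<in>A // r. \<forall>D\<in>A // r. C \<noteq> D \<longrightarrow> C \<inter> D = {}"
    using quotient_disj[OF r] by blast
  ultimately show ?thesis
    using sum.Union_disjoint[of "A // r" f] Union_quotient[OF r] by simp
qed

lemma kernel_component_sum_subset:
  fixes V :: "'t set" and g :: "'t \<Rightarrow> 'a::field"
  assumes V: "finite V" and R: "equiv V R" and W: "fs.subspace W"
    and diff_in_W: "\<And>u v. (u, v) \<in> R \<Longrightarrow> unitv v - unitv u \<in> W"
    and g: "g \<in> fspace V" "component_sum V R g = 0"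
  shows "g \<in> W"
proof -
  \<comment> \<open>On each class C the coordinates of g sum to 0, so g restricted to C is
    the combination of the differences unitv w - unitv (rep C), w in C.\<close>
  define rep :: "'t set \<Rightarrow> 't" where "rep C = (SOME x. x \<in> C)" for C
  have rep: "rep C \<in> C" if "C \<in> V // R" for C
    unfolding rep_def using in_quotient_imp_non_empty[OF R that] by (simp add: some_in_eq)
  have "g = (\<Sum>w\<in>V. fscale (g w) (unitv w))"
    by (rule fspace_eq_sum_unitv[OF V g(1)])
  also have "\<dots> = (\<Sum>C\<in>V // R. \<Sum>w\<in>C. fscale (g w) (unitv w))"
    by (rule sum_quotient[OF V R])
  also have "\<dots> = (\<Sum>C\<in>V // R. \<Sum>w\<in>C. fscale (g w) (unitv w - unitv (rep C)))"
  proof (rule sum.cong[OF refl])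
    fix C assume C: "C \<in> V // R"
    have "(\<Sum>w\<in>C. g w) = 0"
      using fun_cong[OF g(2), of C] C by (simp add: component_sum_def)
    then have "(\<Sum>w\<in>C. fscale (g w) (unitv (rep C))) = 0"
      by (simp add: fun_eq_iff sum_apply flip: sum_distrib_right)
    then show "(\<Sum>w\<in>C. fscale (g w) (unitv w)) = (\<Sum>w\<in>C. fscale (g w) (unitv w - unitv (rep C)))"
      by (simp add: fs.scale_right_diff_distrib sum_subtractf)
  qed
  also have "\<dots> \<in> W"
  proof (intro fs.subspace_sum[OF W] fs.subspace_scale[OF W] diff_in_W)
    fix C w assume "C \<in> V // R" "w \<in> C"
    then show "(rep C, w) \<in> R"
      using in_quotient_imp_in_rel[OF R] rep by blast
  qed
  finally show ?thesis .
qed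

lemma ends_in_V_macro: "e \<in> Q1 \<Longrightarrow> s e \<in> V_macro Q1 s t" "e \<in> Q1 \<Longrightarrow> t e \<in> V_macro Q1 s t"
  by (auto simp: V_macro_def)

lemma B_macro_apply: "B_macro Q1 s t f w = (\<Sum>e\<in>Q1. f e * (unitv (t e) w - unitv (s e) w))"
  by (simp add: B_macro_def sum_apply)

lemma linear_B_macro: "Vector_Spaces.linear fscale fscale (B_macro Q1 s t)"
  by (rule linear_fscaleI)
     (auto simp: fun_eq_iff B_macro_apply distrib_right sum.distrib sum_distrib_left mult.assoc)

lemma B_macro_in_fspace: "B_macro Q1 s t f \<in> fspace (V_macro Q1 s t)"
  unfolding fspace_def V_macro_def by (auto simp: B_macro_apply unitv_apply intro!: sum.neutral)

locale macrograph =
  fixes Q1 :: "'e set" and s t :: "'e \<Rightarrow> 't"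
  assumes finite_edges: "finite Q1"
begin

abbreviation "V \<equiv> V_macro Q1 s t"
abbreviation "conn \<equiv> ((\<lambda>e. (s e, t e)) ` Q1 \<union> (\<lambda>e. (t e, s e)) ` Q1)\<^sup>*"

lemma finite_V_macro: "finite V"
  using finite_edges by (simp add: V_macro_def)

lemma conn_closed: "(u, v) \<in> conn \<Longrightarrow> u \<in> V \<Longrightarrow> v \<in> V"
  by (induction rule: rtrancl_induct) (auto simp: V_macro_def)

(* conn is reflexive on the whole type; restricted to V it is an equivalence on V
   with the same classes. *)
lemma equiv_Restr_conn: "equiv V (Restr conn V)"
proof -
  have "sym conn"
    by (rule sym_rtrancl) (auto simp: sym_def)
  then show ?thesis
    by (auto simp: equiv_def refl_on_def sym_def trans_def)
qed

lemma quotient_Restr_conn: "V // Restr conn V = V // conn"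
  unfolding quotient_def using conn_closed by blast

lemma B_macro_unitv: "e \<in> Q1 \<Longrightarrow> B_macro Q1 s t (unitv e) = unitv (t e) - unitv (s e)"
  by (rule ext)
    (simp add: B_macro_apply unitv_apply[of e] finite_edges if_distrib[of "\<lambda>c. c * _"] cong: if_cong)

lemma subspace_image_B_macro: "fs.subspace (B_macro Q1 s t ` fspace Q1)"
  by (rule fsp.linear_subspace_image[OF linear_B_macro subspace_fspace])

lemma unitv_diff_in_image_B_macro:
  "(u, v) \<in> conn \<Longrightarrow> unitv v - unitv u \<in> B_macro Q1 s t ` (fspace Q1 :: ('e \<Rightarrow> 'a::field) set)"
proof (induction rule: rtrancl_induct)
  case base
  show ?case
    using fs.subspace_0[OF subspace_image_B_macro] by (simp only: diff_self)
next
  case (step v w)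
  from step(2) obtain e where e: "e \<in> Q1" "(v, w) = (s e, t e) \<or> (v, w) = (t e, s e)"
    by blast
  have forward: "unitv (t e) - unitv (s e) \<in> B_macro Q1 s t ` (fspace Q1 :: ('e \<Rightarrow> 'a) set)"
    unfolding B_macro_unitv[OF e(1), symmetric] using unitv_in_fspace[OF e(1)] by (rule imageI)
  moreover have "unitv (s e) - unitv (t e) \<in> B_macro Q1 s t ` (fspace Q1 :: ('e \<Rightarrow> 'a) set)"
    using fs.subspace_neg[OF subspace_image_B_macro forward] by simp
  ultimately have "unitv w - unitv v \<in> B_macro Q1 s t ` (fspace Q1 :: ('e \<Rightarrow> 'a) set)"
    using e(2) by blast
  then have "(unitv w - unitv v) + (unitv v - unitv u) \<in> B_macro Q1 s t ` (fspace Q1 :: ('e \<Rightarrow> 'a) set)"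
    by (rule fs.subspace_add[OF subspace_image_B_macro _ step(3)])
  then show ?case
    by (metis diff_add_cancel add_diff_eq)
qed

lemma component_sum_B_macro:
  fixes f :: "'e \<Rightarrow> 'a::field"
  shows "component_sum V (Restr conn V) (B_macro Q1 s t f) = 0"
proof -
  have edge: "component_sum V (Restr conn V) (unitv (t e)) =
      component_sum V (Restr conn V) (unitv (s e) :: 't \<Rightarrow> 'a)"
    if "e \<in> Q1" for e
  proof -
    have "(s e, t e) \<in> Restr conn V"
      using ends_in_V_macro[OF that] that by blast
    then have "Restr conn V `` {s e} = Restr conn V `` {t e}"
      by (rule equiv_class_eq[OF equiv_Restr_conn])
    then show ?thesis
      by (simp add: component_sum_unitv[OF finite_V_macro equiv_Restr_conn] ends_in_V_macro[OF that])
  qed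
  have "component_sum V (Restr conn V) (B_macro Q1 s t f) = (\<Sum>e\<in>Q1. fscale (f e)
      (component_sum V (Restr conn V) (unitv (t e)) - component_sum V (Restr conn V) (unitv (s e))))"
    unfolding B_macro_def
    by (simp only: fsp.linear_sum[OF linear_component_sum] fsp.linear_scale[OF linear_component_sum]
        fsp.linear_diff[OF linear_component_sum] o_def)
  also have "\<dots> = 0"
    by (rule sum.neutral) (simp add: edge fscale_def zero_fun_def)
  finally show ?thesis .
qed

lemma image_B_macro:
  "B_macro Q1 s t ` (fspace Q1 :: ('e \<Rightarrow> 'a::field) set) =
    {g \<in> fspace V. component_sum V (Restr conn V) g = 0}"
proof (intro equalityI subsetI)
  fix g :: "'t \<Rightarrow> 'a"
  assume "g \<in> B_macro Q1 s t ` fspace Q1"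
  then obtain f where "g = B_macro Q1 s t f"
    by blast
  then show "g \<in> {g \<in> fspace V. component_sum V (Restr conn V) g = 0}"
    by (simp add: B_macro_in_fspace component_sum_B_macro)
next
  fix g :: "'t \<Rightarrow> 'a"
  assume g: "g \<in> {g \<in> fspace V. component_sum V (Restr conn V) g = 0}"
  show "g \<in> B_macro Q1 s t ` fspace Q1"
  proof (rule kernel_component_sum_subset[OF finite_V_macro equiv_Restr_conn subspace_image_B_macro])
    show "unitv v - unitv u \<in> B_macro Q1 s t ` fspace Q1" if "(u, v) \<in> Restr conn V" for u v
      using that by (blast intro: unitv_diff_in_image_B_macro)
  qed (use g in auto)
qed

lemma dim_image_B_macro:
  "fdim (B_macro Q1 s t ` (fspace Q1 :: ('e \<Rightarrow> 'a::field) set)) + c_macro Q1 s t = card V"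
proof -
  have "card V = fdim (component_sum V (Restr conn V) ` (fspace V :: ('t \<Rightarrow> 'a) set))
      + fdim {g \<in> fspace V. component_sum V (Restr conn V) g = (0 :: 't set \<Rightarrow> 'a)}"
    by (rule rank_nullity_fspace[OF finite_V_macro linear_component_sum])
  moreover have "fdim (component_sum V (Restr conn V) ` (fspace V :: ('t \<Rightarrow> 'a) set)) = c_macro Q1 s t"
    unfolding component_sum_image[OF finite_V_macro equiv_Restr_conn] c_macro_def
      quotient_Restr_conn[symmetric] fdim_def
    by (rule dim_fspace[OF finite_quotient[OF finite_V_macro equiv_type[OF equiv_Restr_conn]]])
  ultimately show ?thesis
    unfolding image_B_macro by simp
qed

end

lemma eval_macro_apply: "eval_macro Q1 A B g x = (\<Sum>w\<in>V_macro Q1 A B. g w * w x)"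
  by (simp add: eval_macro_def sum_apply)

lemma linear_eval_macro: "Vector_Spaces.linear fscale fscale (eval_macro Q1 A B)"
  by (rule linear_fscaleI)
     (auto simp: fun_eq_iff eval_macro_apply distrib_right sum.distrib sum_distrib_left mult.assoc)

lemma eval_macro_unitv:
  assumes "finite Q1" "w \<in> V_macro Q1 A B"
  shows "eval_macro Q1 A B (unitv w) = w"
  using assms
  by (intro ext)
    (simp add: eval_macro_apply unitv_apply[of w] V_macro_def if_distrib[of "\<lambda>c. c * _"] cong: if_cong)

lemma tensor_incidence_eq_eval_macro_B_macro:
  assumes "finite Q1"
  shows "tensor_incidence Q1 A B f = eval_macro Q1 A B (B_macro Q1 A B f)"
proof -
  have "eval_macro Q1 A B (B_macro Q1 A B f) =
      (\<Sum>e\<in>Q1. fscale (f e) (eval_macro Q1 A B (unitv (B e)) - eval_macro Q1 A B (unitv (A e))))"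
    unfolding B_macro_def
    by (simp only: fsp.linear_sum[OF linear_eval_macro] fsp.linear_scale[OF linear_eval_macro]
        fsp.linear_diff[OF linear_eval_macro] o_def)
  also have "\<dots> = tensor_incidence Q1 A B f"
    unfolding tensor_incidence_def
    by (rule sum.cong) (auto simp: eval_macro_unitv assms V_macro_def)
  finally show ?thesis by simp
qed

lemma dim_cycle_space:
  fixes A B :: "'e \<Rightarrow> 'v list \<Rightarrow> 'a::field"
  assumes "finite Q1"
  shows "fdim (cycle_space Q1 A B) =
    defect Q1 A B + fdim {f \<in> fspace Q1. B_macro Q1 A B f = (0 :: ('v list \<Rightarrow> 'a) \<Rightarrow> 'a)}"
proof -
  let ?K = "{g \<in> fspace (V_macro Q1 A B). eval_macro Q1 A B g = 0}"
  have cycles: "cycle_space Q1 A B = {f \<in> fspace Q1. B_macro Q1 A B f \<in> ?K}"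
    by (simp add: cycle_space_def tensor_incidence_eq_eval_macro_B_macro[OF assms] B_macro_in_fspace)
  have "?K = fspace (V_macro Q1 A B) \<inter> {g. eval_macro Q1 A B g = 0}"
    by blast
  then have "fs.subspace ?K"
    using fs.subspace_inter[OF subspace_fspace fsp.linear_subspace_kernel[OF linear_eval_macro]]
    by simp
  then show ?thesis
    unfolding cycles defect_def fdim_def
    by (rule fsp.dim_preimage_subspace[OF linear_B_macro subspace_fspace _ _ equalityD2[OF span_unitv]])
      (simp_all add: assms)
qed

theorem theorem3p14:
  fixes Q0 :: "'v set" and Q1 :: "'e set"
    and A B :: "'e \<Rightarrow> 'v list \<Rightarrow> 'a::field"
  assumes "tensor_hypergraph Q0 Q1 A B"
  shows "int (fdim (cycle_space Q1 A B)) =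
           int (card Q1) - int (card (V_macro Q1 A B)) + int (c_macro Q1 A B)
           + int (defect Q1 A B)"
proof -
  have fin: "finite Q1"
    using assms by (simp add: tensor_hypergraph_def)
  then interpret macrograph Q1 A B
    by unfold_locales
  let ?L = "B_macro Q1 A B :: ('e \<Rightarrow> 'a) \<Rightarrow> _"
  have "fdim (cycle_space Q1 A B) = defect Q1 A B + fdim {f \<in> fspace Q1. ?L f = 0}"
    by (rule dim_cycle_space[OF fin])
  moreover have "card Q1 = fdim (?L ` fspace Q1) + fdim {f \<in> fspace Q1. ?L f = 0}"
    by (rule rank_nullity_fspace[OF fin linear_B_macro])
  moreover have "fdim (?L ` fspace Q1) + c_macro Q1 A B = card (V_macro Q1 A B)"
    by (rule dim_image_B_macro)
  ultimately show ?thesis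
    by linarith
qed

end
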